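(* Let $\Omega\subset\mathbb{R}^n$ ($n\ge2$) be open, $\alpha\in[0,n]$ and $\mathcal{G}\in L^1(\Omega;\mathbb{R}^+)$. Suppose that for some $\lambda,\varrho>0$ and $\xi\in\Omega$ there is a point $z\in\Omega_\varrho(\xi)$ with $\mathbf{M}_\alpha\mathcal{G}(z)\le\lambda$. Then for all $\sigma>3^n$, $$d^\alpha_{\mathcal{G}}(\Omega_\varrho(\xi);\sigma\lambda)\le d^\alpha_{\chi_{B_{2\varrho}(\xi)}\mathcal{G}}(\Omega_\varrho(\xi);\sigma\lambda).$$
   Context: Functions on $\Omega$ are extended by zero outside $\Omega$. $B_\rho(x)$ is the open ball, $\Omega_\rho(x)=B_\rho(x)\cap\Omega$, $\chi_E$ the indicator of $E$. $\mathbf{M}_\alpha f(x)=\sup_{\rho>0}\rho^\alpha\fint_{B_\rho(x)}|f|$ and $d^\alpha_{h}(E;\lambda)=\mathcal{L}^n(\{x\in E:\mathbf{M}_\alpha h(x)>\lambda\})$. *)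

theory Defs
  imports "HOL-Analysis.Analysis"
begin

definition zero_ext :: "'a set \<Rightarrow> ('a \<Rightarrow> real) \<Rightarrow> 'a \<Rightarrow> real" where
  "zero_ext \<Omega> f = (\<lambda>x. if x \<in> \<Omega> then f x else 0)"

definition frac_max :: "real \<Rightarrow> ('a::euclidean_space \<Rightarrow> real) \<Rightarrow> 'a \<Rightarrow> ennreal" where
  "frac_max \<alpha> f x = (SUP \<rho>\<in>{0<..}. ennreal (\<rho> powr \<alpha>) *
      ((\<integral>\<^sup>+ y \<in> ball x \<rho>. ennreal \<bar>f y\<bar> \<partial>lebesgue) / emeasure lebesgue (ball x \<rho>)))"

definition dist_fun :: "real \<Rightarrow> ('a::euclidean_space \<Rightarrow> real) \<Rightarrow> 'a set \<Rightarrow> real \<Rightarrow> ennreal" where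
  "dist_fun \<alpha> h E t = emeasure lebesgue {x \<in> E. frac_max \<alpha> h x > ennreal t}"

end

theory Submission
  imports Defs
begin

text \<open>If the fractional average of \<open>\<G>\<close> over \<open>B\<^sub>r(x)\<close>, \<open>x \<in> B\<^sub>\<rho>(\<xi>)\<close>, exceeds \<open>\<sigma>\<lambda>\<close> while
  \<open>M\<^sub>\<alpha>\<G>(z) \<le> \<lambda>\<close> for some \<open>z \<in> B\<^sub>\<rho>(\<xi>)\<close>, then \<open>r < \<rho>\<close>: otherwise \<open>B\<^sub>r(x) \<subseteq> B\<^sub>3\<^sub>r(z)\<close>, and
  passing to the larger ball costs at most a factor \<open>3\<^sup>n\<^sup>-\<^sup>\<alpha> \<le> 3\<^sup>n < \<sigma>\<close>.  Hence every ball
  witnessing \<open>M\<^sub>\<alpha>\<G>(x) > \<sigma>\<lambda>\<close> lies in \<open>B\<^sub>2\<^sub>\<rho>(\<xi>)\<close>, where \<open>\<G>\<close> and \<open>\<chi>\<^bsub>B\<^sub>2\<^sub>\<rho>(\<xi>)\<^esub>\<G>\<close> agree.\<close>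

definition frac_avg :: "real \<Rightarrow> ('a::euclidean_space \<Rightarrow> real) \<Rightarrow> 'a \<Rightarrow> real \<Rightarrow> ennreal" where
  "frac_avg \<alpha> f x r = ennreal (r powr \<alpha>) *
      ((\<integral>\<^sup>+ y \<in> ball x r. ennreal \<bar>f y\<bar> \<partial>lebesgue) / emeasure lebesgue (ball x r))"

lemma frac_max_eq_SUP_frac_avg: "frac_max \<alpha> f x = (SUP r\<in>{0<..}. frac_avg \<alpha> f x r)"
  by (simp add: frac_max_def frac_avg_def)

lemma frac_avg_le_frac_max: "r > 0 \<Longrightarrow> frac_avg \<alpha> f x r \<le> frac_max \<alpha> f x"
  unfolding frac_max_eq_SUP_frac_avg by (rule SUP_upper) simp

lemma less_frac_max_iff: "t < frac_max \<alpha> f x \<longleftrightarrow> (\<exists>r>0. t < frac_avg \<alpha> f x r)"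
  unfolding frac_max_eq_SUP_frac_avg by (auto simp: less_SUP_iff)

lemma frac_avg_cong:
  assumes "\<And>y. y \<in> ball x r \<Longrightarrow> f y = g y"
  shows "frac_avg \<alpha> f x r = frac_avg \<alpha> g x r"
proof -
  have "(\<integral>\<^sup>+ y \<in> ball x r. ennreal \<bar>f y\<bar> \<partial>lebesgue) = (\<integral>\<^sup>+ y \<in> ball x r. ennreal \<bar>g y\<bar> \<partial>lebesgue)"
    using assms by (intro nn_integral_cong) (simp split: split_indicator)
  then show ?thesis
    by (simp add: frac_avg_def)
qed

lemma frac_avg_mono:
  "(\<And>y. \<bar>f y\<bar> \<le> \<bar>g y\<bar>) \<Longrightarrow> frac_avg \<alpha> f x r \<le> frac_avg \<alpha> g x r"
  unfolding frac_avg_def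
  by (intro mult_left_mono divide_right_mono_ennreal nn_integral_mono) (auto split: split_indicator)

lemma frac_max_mono:
  "(\<And>y. \<bar>f y\<bar> \<le> \<bar>g y\<bar>) \<Longrightarrow> frac_max \<alpha> f x \<le> frac_max \<alpha> g x"
  unfolding frac_max_eq_SUP_frac_avg by (intro SUP_mono' frac_avg_mono)

lemma frac_avg_eq_nn_integral_times:
  fixes f :: "'a::euclidean_space \<Rightarrow> real"
  assumes "r > 0"
  shows "frac_avg \<alpha> f x r = (\<integral>\<^sup>+ y \<in> ball x r. ennreal \<bar>f y\<bar> \<partial>lebesgue) *
           ennreal (r powr \<alpha> / (unit_ball_vol DIM('a) * r ^ DIM('a)))"
proof -
  define V where "V = unit_ball_vol DIM('a) * r ^ DIM('a)"
  have "V > 0"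
    using assms by (simp add: V_def)
  have "emeasure lebesgue (ball x r) = ennreal V"
    using emeasure_ball[of r x] assms by (simp add: V_def)
  with \<open>V > 0\<close> show ?thesis
    by (simp add: frac_avg_def V_def [symmetric] divide_ennreal_def inverse_ennreal
        ennreal_mult' divide_inverse mult_ac)
qed

lemma frac_avg_le_dilated:
  fixes f :: "'a::euclidean_space \<Rightarrow> real"
  assumes sub: "ball x r \<subseteq> ball z (k * r)" and "r > 0" "k \<ge> 1" "\<alpha> \<ge> 0"
  shows "frac_avg \<alpha> f x r \<le> ennreal (k ^ DIM('a)) * frac_avg \<alpha> f z (k * r)"
proof -
  define c where "c = unit_ball_vol DIM('a)"
  have "c > 0" "k * r > 0"
    using assms by (auto simp: c_def)
  have coeff: "r powr \<alpha> / (c * r ^ DIM('a)) \<le> k ^ DIM('a) * ((k * r) powr \<alpha> / (c * (k * r) ^ DIM('a)))"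
  proof -
    have "r powr \<alpha> \<le> (k * r) powr \<alpha>"
      using assms by (intro powr_mono2) auto
    then show ?thesis
      using \<open>c > 0\<close> \<open>r > 0\<close> \<open>k \<ge> 1\<close> by (simp add: power_mult_distrib divide_right_mono)
  qed
  then have coeff': "ennreal (r powr \<alpha> / (c * r ^ DIM('a))) \<le>
      ennreal (k ^ DIM('a)) * ennreal ((k * r) powr \<alpha> / (c * (k * r) ^ DIM('a)))"
    using \<open>c > 0\<close> \<open>r > 0\<close> \<open>k \<ge> 1\<close> by (subst ennreal_mult [symmetric]) (auto intro: ennreal_leI)
  have "frac_avg \<alpha> f x r = (\<integral>\<^sup>+ y \<in> ball x r. ennreal \<bar>f y\<bar> \<partial>lebesgue) * ennreal (r powr \<alpha> / (c * r ^ DIM('a)))"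
    using \<open>r > 0\<close> by (simp add: frac_avg_eq_nn_integral_times c_def)
  also have "\<dots> \<le> (\<integral>\<^sup>+ y \<in> ball z (k * r). ennreal \<bar>f y\<bar> \<partial>lebesgue) *
      (ennreal (k ^ DIM('a)) * ennreal ((k * r) powr \<alpha> / (c * (k * r) ^ DIM('a))))"
    using sub coeff' by (intro mult_mono nn_integral_mono) (auto split: split_indicator)
  also have "\<dots> = ennreal (k ^ DIM('a)) * frac_avg \<alpha> f z (k * r)"
    using \<open>k * r > 0\<close> by (simp add: frac_avg_eq_nn_integral_times c_def mult_ac)
  finally show ?thesis .
qed

lemma radius_less_if_frac_avg_gt:
  fixes f :: "'a::euclidean_space \<Rightarrow> real"
  assumes "x \<in> ball \<xi> \<rho>" "z \<in> ball \<xi> \<rho>" and z: "frac_max \<alpha> f z \<le> ennreal lam"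
    and "3 ^ DIM('a) \<le> \<sigma>" "0 \<le> \<alpha>" "0 \<le> lam" "r > 0"
    and x: "ennreal (\<sigma> * lam) < frac_avg \<alpha> f x r"
  shows "r < \<rho>"
proof (rule ccontr)
  assume "\<not> r < \<rho>"
  have "ball x r \<subseteq> ball z (3 * r)"
  proof
    fix y assume "y \<in> ball x r"
    moreover have "dist z x < 2 * r"
      using assms(1,2) \<open>\<not> r < \<rho>\<close> dist_triangle[of z x \<xi>] by (simp add: dist_commute)
    ultimately show "y \<in> ball z (3 * r)"
      using dist_triangle[of z y x] by simp
  qed
  then have "frac_avg \<alpha> f x r \<le> ennreal (3 ^ DIM('a)) * frac_avg \<alpha> f z (3 * r)"
    using assms by (intro frac_avg_le_dilated) auto
  also have "\<dots> \<le> ennreal (3 ^ DIM('a)) * ennreal lam"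
    using frac_avg_le_frac_max[of "3 * r" \<alpha> f z] z \<open>r > 0\<close> by (intro mult_left_mono) auto
  also have "\<dots> \<le> ennreal (\<sigma> * lam)"
    using assms by (subst ennreal_mult [symmetric]) (auto intro: ennreal_leI mult_right_mono)
  finally show False
    using x by simp
qed

lemma less_frac_max_restrict_ball:
  fixes f :: "'a::euclidean_space \<Rightarrow> real"
  assumes "x \<in> ball \<xi> \<rho>" "z \<in> ball \<xi> \<rho>" "frac_max \<alpha> f z \<le> ennreal lam"
    and "3 ^ DIM('a) \<le> \<sigma>" "0 \<le> \<alpha>" "0 \<le> lam"
    and "ennreal (\<sigma> * lam) < frac_max \<alpha> f x"
  shows "ennreal (\<sigma> * lam) < frac_max \<alpha> (\<lambda>y. indicator (ball \<xi> (2 * \<rho>)) y * f y) x"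
proof -
  obtain r where "r > 0" and r: "ennreal (\<sigma> * lam) < frac_avg \<alpha> f x r"
    using assms(7) by (auto simp: less_frac_max_iff)
  have "r < \<rho>"
    using radius_less_if_frac_avg_gt[OF assms(1-6) \<open>r > 0\<close> r] .
  have "ball x r \<subseteq> ball \<xi> (2 * \<rho>)"
  proof
    fix y assume "y \<in> ball x r"
    then show "y \<in> ball \<xi> (2 * \<rho>)"
      using assms(1) \<open>r < \<rho>\<close> dist_triangle[of \<xi> y x] by simp
  qed
  then have "frac_avg \<alpha> f x r = frac_avg \<alpha> (\<lambda>y. indicator (ball \<xi> (2 * \<rho>)) y * f y) x r"
    by (intro frac_avg_cong) auto
  then show ?thesis
    using r \<open>r > 0\<close> by (auto simp: less_frac_max_iff)
qed

theorem mainTheorem6: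
  fixes \<Omega> :: "'a::euclidean_space set" and G :: "'a \<Rightarrow> real"
    and \<alpha> lam \<rho> \<sigma> :: real and \<xi> z :: 'a
  assumes "DIM('a) \<ge> 2"
    and "open \<Omega>"
    and "0 \<le> \<alpha>" "\<alpha> \<le> real DIM('a)"
    and "set_integrable lebesgue \<Omega> G"
    and "\<And>x. x \<in> \<Omega> \<Longrightarrow> G x \<ge> 0"
    and "lam > 0" "\<rho> > 0" "\<xi> \<in> \<Omega>"
    and "z \<in> ball \<xi> \<rho> \<inter> \<Omega>"
    and "frac_max \<alpha> (zero_ext \<Omega> G) z \<le> ennreal lam"
    and "\<sigma> > 3 ^ DIM('a)"
  shows "dist_fun \<alpha> (zero_ext \<Omega> G) (ball \<xi> \<rho> \<inter> \<Omega>) (\<sigma> * lam)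
         \<le> dist_fun \<alpha> (\<lambda>x. indicator (ball \<xi> (2 * \<rho>)) x * zero_ext \<Omega> G x) (ball \<xi> \<rho> \<inter> \<Omega>) (\<sigma> * lam)"
proof -
  let ?G = "zero_ext \<Omega> G" and ?G\<^sub>2\<^sub>\<rho> = "\<lambda>x. indicator (ball \<xi> (2 * \<rho>)) x * zero_ext \<Omega> G x"
  have "frac_max \<alpha> ?G x > ennreal (\<sigma> * lam) \<longleftrightarrow> frac_max \<alpha> ?G\<^sub>2\<^sub>\<rho> x > ennreal (\<sigma> * lam)"
    if "x \<in> ball \<xi> \<rho>" for x
  proof
    show "frac_max \<alpha> ?G x > ennreal (\<sigma> * lam) \<Longrightarrow> frac_max \<alpha> ?G\<^sub>2\<^sub>\<rho> x > ennreal (\<sigma> * lam)"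
      using that assms by (intro less_frac_max_restrict_ball[where z = z]) auto
    show "frac_max \<alpha> ?G\<^sub>2\<^sub>\<rho> x > ennreal (\<sigma> * lam) \<Longrightarrow> frac_max \<alpha> ?G x > ennreal (\<sigma> * lam)"
      using frac_max_mono[of ?G\<^sub>2\<^sub>\<rho> ?G \<alpha> x] by (force simp: abs_mult split: split_indicator)
  qed
  \<comment> \<open>The level sets agree; mere inclusion would not do, since neither is known to be measurable.\<close>
  then show ?thesis
    unfolding dist_fun_def by (intro eq_refl arg_cong[where f = "emeasure lebesgue"]) auto
qed

end
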